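(* Let $v:\mathbb{R}\times\mathscr{Z}_s\to\mathscr{Z}_{-\sigma}$ be a Borel vector field which is bounded on bounded sets, let $I$ be a bounded open interval and $t_0\in I$. Assume there exist a Borel set $\mathcal{A}\subset\mathscr{Z}_s$ and a Borel map $\phi:\bar I\times\mathcal{A}\to\mathscr{Z}_s$, bounded on bounded sets, such that for every $x\in\mathcal{A}$ the curve $t\in\bar I\mapsto\phi(t,x)$ is a weak solution of $\dot u=v(t,u)$ with $\phi(t_0,x)=x$. Then for every Borel probability measure $\nu$ on $\mathscr{Z}_s$ concentrated on $\mathcal{A}$ and on a bounded subset of $\mathscr{Z}_s$, the curve $\mu_t:=\phi(t,\cdot)_\sharp\nu$, $t\in I$, solves the Liouville equation on $I$, satisfies $\mu_{t_0}=\nu$, and $t\mapsto\mu_t$ is strongly narrowly continuous in the Borel probability measures on $\mathscr{Z}_{-\sigma}$.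
   Context: Let $\mathscr{Z}_0$ be a separable complex Hilbert space, $A$ self-adjoint with $A\ge c\,1$, $c>0$; $\mathscr{Z}_\tau$ is the completion of $D(A^{\tau/2})$ for $\langle A^{\tau/2}\cdot,A^{\tau/2}\cdot\rangle_{\mathscr{Z}_0}$; fix $0\le s\le\sigma$, so $\mathscr{Z}_s\subset\mathscr{Z}_0\subset\mathscr{Z}_{-\sigma}$. Weak solution on $I$: $u\in L^\infty(I,\mathscr{Z}_s)\cap W^{1,\infty}(I,\mathscr{Z}_{-\sigma})$ with $\dot u(t)=v(t,u(t))$ for a.e. $t\in I$. Liouville equation on $I$: $\int_I\int_{\mathscr{Z}_{-\sigma}}(\partial_t\varphi+\mathrm{Re}\langle v(t,x),\nabla\varphi(t,x)\rangle_{\mathscr{Z}_{-\sigma}})d\mu_t dt=0$ for all $\varphi(t,x)=\psi(t,\pi(x))$ with $\psi\in C_0^\infty(I\times\mathbb{R}^n)$, $\pi(x)=(\mathrm{Re}\langle x,e_i\rangle_{\mathscr{Z}_{-\sigma}})_{i=1}^n$ for an orthonormal family $(e_i)$ of the real Hilbert space $(\mathscr{Z}_{-\sigma},\mathrm{Re}\langle\cdot,\cdot\rangle_{\mathscr{Z}_{-\sigma}})$, $\nabla$ the real gradient. Strong narrow continuity means $t\mapsto\int f\,d\mu_t$ continuous for every bounded norm-continuous $f$ on $\mathscr{Z}_{-\sigma}$. *)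

theory Defs
  imports "HOL-Probability.Probability"
begin

text \<open>Essentially bounded, (strongly) measurable functions on an interval J
  (the space L-infinity(J, X) for a separable Banach space X), pointwise representatives.\<close>
definition Linfty_on :: "real set \<Rightarrow> (real \<Rightarrow> 'x::real_normed_vector) \<Rightarrow> bool" where
  "Linfty_on J u \<longleftrightarrow> u \<in> borel_measurable (restrict_space lebesgue J) \<and>
     (\<exists>M. AE t in lebesgue. t \<in> J \<longrightarrow> norm (u t) \<le> M)"

text \<open>Weak solution on the interval J of  u' = v(t,u), where iota embeds Z_s into Z_{-sigma}:
  u is in L-infinity(J,Z_s); iota o u is in W^{1,infty}(J,Z_{-sigma}) (we use the continuous
  representative), i.e. iota o u is the primitive of some w in L-infinity(J,Z_{-sigma})
  (its weak derivative); and w(t) = v(t,u(t)) for a.e. t in J.\<close>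
definition weak_solution ::
  "('a::real_normed_vector \<Rightarrow> 'b::real_normed_vector) \<Rightarrow> (real \<Rightarrow> 'a \<Rightarrow> 'b) \<Rightarrow> real set
     \<Rightarrow> (real \<Rightarrow> 'a) \<Rightarrow> bool"
  where "weak_solution \<iota> v J u \<longleftrightarrow>
    Linfty_on J u \<and>
    (\<exists>w. Linfty_on J w \<and>
         (\<forall>s\<in>J. \<forall>t\<in>J. s \<le> t \<longrightarrow> (w has_integral (\<iota> (u t) - \<iota> (u s))) {s..t}) \<and>
         (AE t in lebesgue. t \<in> J \<longrightarrow> w t = v t (u t)))"

fun Ck :: "nat \<Rightarrow> ('e::euclidean_space \<Rightarrow> real) \<Rightarrow> bool" where
  "Ck 0 f \<longleftrightarrow> continuous_on UNIV f"
| "Ck (Suc k) f \<longleftrightarrow> (\<forall>x. f differentiable (at x)) \<and>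
      (\<forall>i\<in>Basis. Ck k (\<lambda>x. frechet_derivative f (at x) i))"

definition smooth_fun :: "('e::euclidean_space \<Rightarrow> real) \<Rightarrow> bool" where
  "smooth_fun f \<longleftrightarrow> (\<forall>k. Ck k f)"

text \<open>psi in C_0^infty(I x R^n): smooth with compact support contained in I x R^n
  (extended by zero outside).\<close>
definition test_fun :: "real set \<Rightarrow> (real \<times> (real^'n) \<Rightarrow> real) \<Rightarrow> bool" where
  "test_fun I \<psi> \<longleftrightarrow> smooth_fun \<psi> \<and> compact (closure {p. \<psi> p \<noteq> 0}) \<and>
      closure {p. \<psi> p \<noteq> 0} \<subseteq> I \<times> UNIV"

text \<open>Orthonormal family of the real Hilbert space (Re of the inner product).\<close>
definition orthonormal_fam :: "('n \<Rightarrow> 'b::real_inner) \<Rightarrow> bool" where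
  "orthonormal_fam e \<longleftrightarrow> (\<forall>i j. inner (e i) (e j) = (if i = j then 1 else 0))"

definition cyl_proj :: "('n::finite \<Rightarrow> 'b::real_inner) \<Rightarrow> 'b \<Rightarrow> real^'n" where
  "cyl_proj e x = (\<chi> i. inner x (e i))"

definition cyl_fun :: "(real \<times> (real^'n) \<Rightarrow> real) \<Rightarrow> ('n::finite \<Rightarrow> 'b::real_inner) \<Rightarrow> real \<Rightarrow> 'b \<Rightarrow> real" where
  "cyl_fun \<psi> e t x = \<psi> (t, cyl_proj e x)"

definition real_grad :: "('b::real_inner \<Rightarrow> real) \<Rightarrow> 'b \<Rightarrow> 'b" where
  "real_grad f x = (THE D. GDERIV f x :> D)"

definition liouville_integrand ::
  "(real \<Rightarrow> 'a \<Rightarrow> 'b::real_inner) \<Rightarrow> ('a \<Rightarrow> 'b) \<Rightarrow> (real \<times> (real^'n) \<Rightarrow> real) \<Rightarrow> ('n::finite \<Rightarrow> 'b)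
     \<Rightarrow> real \<Rightarrow> 'a \<Rightarrow> real" where
  "liouville_integrand v \<iota> \<psi> e t x =
     deriv (\<lambda>\<tau>. cyl_fun \<psi> e \<tau> (\<iota> x)) t + inner (v t x) (real_grad (cyl_fun \<psi> e t) (\<iota> x))"

text \<open>Liouville equation on I for a curve of measures mu_t on Z_s (regarded, via iota, as
  measures on Z_{-sigma}), tested with cylindrical functions built on an orthonormal family
  indexed by the finite type 'n.\<close>
definition liouville_eq ::
  "real set \<Rightarrow> (real \<Rightarrow> 'a \<Rightarrow> 'b::real_inner) \<Rightarrow> ('a \<Rightarrow> 'b) \<Rightarrow> (real \<Rightarrow> 'a measure)
     \<Rightarrow> ('n::finite \<Rightarrow> 'b) \<Rightarrow> bool" where
  "liouville_eq I v \<iota> \<mu> e \<longleftrightarrow> orthonormal_fam e \<longrightarrow>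
     (\<forall>\<psi>. test_fun I \<psi> \<longrightarrow>
        (AE t in lebesgue. t \<in> I \<longrightarrow> integrable (\<mu> t) (liouville_integrand v \<iota> \<psi> e t)) \<and>
        set_integrable lebesgue I (\<lambda>t. LINT x|\<mu> t. liouville_integrand v \<iota> \<psi> e t x) \<and>
        (LINT t:I|lebesgue. (LINT x|\<mu> t. liouville_integrand v \<iota> \<psi> e t x)) = 0)"

definition strongly_narrowly_continuous ::
  "real set \<Rightarrow> ('a \<Rightarrow> 'b::real_normed_vector) \<Rightarrow> (real \<Rightarrow> 'a measure) \<Rightarrow> bool" where
  "strongly_narrowly_continuous I \<iota> \<mu> \<longleftrightarrow>
     (\<forall>f::'b \<Rightarrow> real. continuous_on UNIV f \<and> bounded (range f) \<longrightarrow>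
        continuous_on I (\<lambda>t. LINT y|distr (\<mu> t) borel \<iota>. f y))"

end

theory Submission
  imports Defs
begin

text \<open>For \<open>x \<in> A\<close> the curve \<open>t \<mapsto> \<iota> (\<phi> t x)\<close> is Lipschitz, with weak derivative
  \<open>v t (\<phi> t x)\<close>. Along such a curve the chain rule holds for \<open>C\<^sup>1\<close> functions (compare
  increments with integrals on short intervals, using uniform continuity of the gradient on a
  compact set), so for a cylindrical test function \<open>\<psi>\<close> the Liouville integrand along a
  trajectory is the time derivative of \<open>\<psi>\<close> along it; its integral over \<open>[a, b]\<close> vanishes
  because \<open>\<psi>\<close> vanishes at \<open>t = a, b\<close>. As \<open>\<nu>\<close> lives on a bounded part of \<open>A\<close>, where all
  these quantities are uniformly bounded, Fubini's theorem turns this into the Liouville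
  equation for \<open>\<mu>\<^sub>t = \<phi> t\<^sub>#\<nu>\<close>. The identity \<open>\<mu>\<^sub>t\<^sub>0 = \<nu>\<close> comes from \<open>\<phi> t\<^sub>0 = id\<close> on \<open>A\<close>, and narrow
  continuity from continuity of the trajectories by dominated convergence.\<close>

section \<open>The chain rule along Lipschitz paths\<close>

lemma eq_if_increments_small:
  fixes h :: "real \<Rightarrow> real"
  assumes "a \<le> b"
    and small: "\<And>e. e > 0 \<Longrightarrow> \<exists>d>0. \<forall>s t. a \<le> s \<longrightarrow> s \<le> t \<longrightarrow> t \<le> b \<longrightarrow> t - s < d \<longrightarrow>
                  \<bar>h t - h s\<bar> \<le> e * (t - s)"
  shows "h b = h a"
proof -
  have "(h has_field_derivative 0) (at s within {a..b})" if s: "s \<in> {a..b}" for s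
  proof -
    have "((\<lambda>t. (h t - h s) / (t - s)) \<longlongrightarrow> 0) (at s within {a..b})"
    proof (rule tendstoI)
      fix e :: real assume "e > 0"
      then obtain d where "d > 0" and d: "\<forall>s t. a \<le> s \<longrightarrow> s \<le> t \<longrightarrow> t \<le> b \<longrightarrow> t - s < d \<longrightarrow>
          \<bar>h t - h s\<bar> \<le> (e/2) * (t - s)"
        using small[of "e/2"] by auto
      have "dist ((h t - h s) / (t - s)) 0 < e"
        if t: "t \<in> {a..b}" "t \<noteq> s" "dist t s < d" for t
      proof -
        have "\<bar>h t - h s\<bar> \<le> (e/2) * \<bar>t - s\<bar>"
          using d s t by (cases "s \<le> t") (auto simp: dist_real_def abs_minus_commute)
        then have "\<bar>h t - h s\<bar> / \<bar>t - s\<bar> \<le> e/2"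
          using t(2) by (simp add: divide_le_eq)
        moreover have "dist ((h t - h s) / (t - s)) 0 = \<bar>h t - h s\<bar> / \<bar>t - s\<bar>"
          by (simp add: dist_real_def abs_divide)
        ultimately show ?thesis using \<open>e > 0\<close> by linarith
      qed
      then show "\<forall>\<^sub>F t in at s within {a..b}. dist ((h t - h s) / (t - s)) 0 < e"
        unfolding eventually_at using \<open>d > 0\<close> by blast
    qed
    then show ?thesis by (simp add: has_field_derivative_iff)
  qed
  then obtain c where "\<forall>t\<in>{a..b}. h t = c"
    using has_field_derivative_zero_constant[of "{a..b}" h] by auto
  then show "h b = h a"
    using \<open>a \<le> b\<close> by auto
qed

lemma has_integral_if_increments_approx:
  fixes g F :: "real \<Rightarrow> real"
  assumes "a \<le> b" and F: "F integrable_on {a..b}"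
    and approx: "\<And>e. e > 0 \<Longrightarrow> \<exists>d>0. \<forall>s t. a \<le> s \<longrightarrow> s \<le> t \<longrightarrow> t \<le> b \<longrightarrow> t - s < d \<longrightarrow>
                   \<bar>g t - g s - integral {s..t} F\<bar> \<le> e * (t - s)"
  shows "(F has_integral g b - g a) {a..b}"
proof -
  define h where "h t = g t - integral {a..t} F" for t
  have "h t - h s = g t - g s - integral {s..t} F" if "a \<le> s" "s \<le> t" "t \<le> b" for s t
    using Henstock_Kurzweil_Integration.integral_combine[OF that(1,2)
        integrable_subinterval_real[OF F, of a t]] that
    by (simp add: h_def)
  then have "h b = h a"
    using approx by (intro eq_if_increments_small[OF \<open>a \<le> b\<close>]) simp
  then have "integral {a..b} F = g b - g a"
    by (simp add: h_def)
  then show ?thesis using F by (metis integrable_integral)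
qed

lemma gradient_linearization_bound:
  fixes f :: "'a::real_inner \<Rightarrow> real"
  assumes grad: "\<And>z. z \<in> closed_segment x y \<Longrightarrow> GDERIV f z :> Df z"
    and close: "\<And>z. z \<in> closed_segment x y \<Longrightarrow> norm (Df z - Df x) \<le> B"
  shows "\<bar>f y - f x - (y - x) \<bullet> Df x\<bar> \<le> norm (y - x) * B"
proof -
  have "norm (f y - f x - (y - x) \<bullet> Df x) \<le> norm (y - x) * B"
  proof (rule differentiable_bound_linearization[where S = "closed_segment x y"
        and f' = "\<lambda>z h. h \<bullet> Df z"])
    show "x + t *\<^sub>R (y - x) \<in> closed_segment x y" if "t \<in> {0..1}" for t
      using that by (auto simp: in_segment algebra_simps)
    show "(f has_derivative (\<lambda>h. h \<bullet> Df z)) (at z within closed_segment x y)"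
      if "z \<in> closed_segment x y" for z
      using grad[OF that] by (auto simp: gderiv_def intro: has_derivative_at_withinI)
    show "onorm ((\<lambda>h. h \<bullet> Df z) - (\<lambda>h. h \<bullet> Df x)) \<le> B" if "z \<in> closed_segment x y" for z
    proof (rule onorm_bound)
      show "0 \<le> B" using close[of x] by auto
      fix h
      have "\<bar>h \<bullet> (Df z - Df x)\<bar> \<le> norm h * norm (Df z - Df x)"
        by (rule Cauchy_Schwarz_ineq2)
      also have "\<dots> \<le> norm h * B" using close[OF that] by (simp add: mult_left_mono)
      finally show "norm (((\<lambda>h. h \<bullet> Df z) - (\<lambda>h. h \<bullet> Df x)) h) \<le> B * norm h"
        by (simp add: inner_diff_right mult.commute)
    qed
  qed auto
  then show ?thesis by simp
qed

lemma increment_along_path_minus_integral: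
  fixes f :: "'e::real_inner \<Rightarrow> real" and Df :: "'e \<Rightarrow> 'e" and X X' :: "real \<Rightarrow> 'e"
  assumes grad: "\<And>z. GDERIV f z :> Df z" and "s \<le> t"
    and path: "(X' has_integral X t - X s) {s..t}"
    and int: "(\<lambda>r. X' r \<bullet> Df (X r)) integrable_on {s..t}"
    and bound: "\<And>r. r \<in> {s..t} \<Longrightarrow> norm (X' r) \<le> M"
    and close: "\<And>z. z \<in> closed_segment (X s) (X t) \<union> X ` {s..t} \<Longrightarrow> norm (Df z - Df (X s)) \<le> \<epsilon>"
  shows "\<bar>f (X t) - f (X s) - integral {s..t} (\<lambda>r. X' r \<bullet> Df (X r))\<bar> \<le> 2 * \<epsilon> * M * (t - s)"
proof -
  have "0 \<le> \<epsilon>" using close[of "X s"] by simp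
  have "0 \<le> M" using order_trans[OF norm_ge_zero bound[of s]] \<open>s \<le> t\<close> by simp
  have "norm (X t - X s) \<le> M * (t - s)"
    using has_integral_bound_real[OF \<open>0 \<le> M\<close> finite.emptyI path] bound \<open>s \<le> t\<close> by simp
  have "\<bar>f (X t) - f (X s) - (X t - X s) \<bullet> Df (X s)\<bar> \<le> norm (X t - X s) * \<epsilon>"
    using close by (intro gradient_linearization_bound grad) auto
  also have "\<dots> \<le> M * (t - s) * \<epsilon>"
    using \<open>norm (X t - X s) \<le> M * (t - s)\<close> \<open>0 \<le> \<epsilon>\<close> by (rule mult_right_mono)
  also have "\<dots> = \<epsilon> * M * (t - s)" by simp
  finally have linearization: "\<bar>f (X t) - f (X s) - (X t - X s) \<bullet> Df (X s)\<bar> \<le> \<epsilon> * M * (t - s)" .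
  have diff_int: "((\<lambda>r. X' r \<bullet> Df (X s) - X' r \<bullet> Df (X r)) has_integral
      (X t - X s) \<bullet> Df (X s) - integral {s..t} (\<lambda>r. X' r \<bullet> Df (X r))) {s..t}"
    using has_integral_linear[OF path bounded_linear_inner_left, of "Df (X s)"] int
    by (intro has_integral_diff) (auto simp: o_def)
  have "norm ((X t - X s) \<bullet> Df (X s) - integral {s..t} (\<lambda>r. X' r \<bullet> Df (X r)))
      \<le> M * \<epsilon> * measure lborel {s..t}"
  proof (rule has_integral_bound_real[OF _ finite.emptyI diff_int])
    show "0 \<le> M * \<epsilon>" using \<open>0 \<le> M\<close> \<open>0 \<le> \<epsilon>\<close> by simp
    fix r assume "r \<in> {s..t} - {}"
    then have "norm (X' r) * norm (Df (X s) - Df (X r)) \<le> M * \<epsilon>"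
      using bound[of r] close[of "X r"] \<open>0 \<le> M\<close> by (intro mult_mono) (auto simp: norm_minus_commute)
    then show "norm (X' r \<bullet> Df (X s) - X' r \<bullet> Df (X r)) \<le> M * \<epsilon>"
      using Cauchy_Schwarz_ineq2[of "X' r" "Df (X s) - Df (X r)"] by (simp add: inner_diff_right)
  qed
  then have "\<bar>(X t - X s) \<bullet> Df (X s) - integral {s..t} (\<lambda>r. X' r \<bullet> Df (X r))\<bar> \<le> \<epsilon> * M * (t - s)"
    using \<open>s \<le> t\<close> by (simp add: mult.commute)
  moreover have "\<epsilon> * M * (t - s) + \<epsilon> * M * (t - s) = 2 * \<epsilon> * M * (t - s)" by simp
  ultimately show ?thesis using linearization by arith
qed

lemma has_integral_gradient_along_path:
  fixes f :: "'e::euclidean_space \<Rightarrow> real" and Df :: "'e \<Rightarrow> 'e" and X X' :: "real \<Rightarrow> 'e"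
  assumes grad: "\<And>z. GDERIV f z :> Df z" and cont: "continuous_on UNIV Df"
    and "a \<le> b"
    and bound: "\<And>r. r \<in> {a..b} \<Longrightarrow> norm (X' r) \<le> M"
    and path: "\<And>s t. a \<le> s \<Longrightarrow> s \<le> t \<Longrightarrow> t \<le> b \<Longrightarrow> (X' has_integral X t - X s) {s..t}"
    and int: "(\<lambda>r. X' r \<bullet> Df (X r)) integrable_on {a..b}"
  shows "((\<lambda>r. X' r \<bullet> Df (X r)) has_integral f (X b) - f (X a)) {a..b}"
proof (rule has_integral_if_increments_approx[OF \<open>a \<le> b\<close> int])
  have "0 \<le> M" using order_trans[OF norm_ge_zero bound[of a]] \<open>a \<le> b\<close> by simp
  have incr: "norm (X t - X s) \<le> M * (t - s)" if "a \<le> s" "s \<le> t" "t \<le> b" for s t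
    using has_integral_bound_real[OF \<open>0 \<le> M\<close> finite.emptyI path[OF that]] bound that by auto
  define K where "K = cball (X a) (M * (b - a))"
  have XK: "X r \<in> K" if "r \<in> {a..b}" for r
    using incr[of a r] that mult_left_mono[of "r - a" "b - a" M] \<open>0 \<le> M\<close>
    by (auto simp: K_def dist_norm norm_minus_commute)
  have "uniformly_continuous_on K Df"
    unfolding K_def by (rule compact_uniformly_continuous[OF continuous_on_subset[OF cont]]) auto
  fix e :: real assume "e > 0"
  define \<epsilon> where "\<epsilon> = e / (2 * (M + 1))"
  have "\<epsilon> > 0" using \<open>0 \<le> M\<close> \<open>e > 0\<close> by (simp add: \<epsilon>_def)
  then obtain d where "d > 0"
    and d: "\<And>z z'. z \<in> K \<Longrightarrow> z' \<in> K \<Longrightarrow> dist z' z < d \<Longrightarrow> dist (Df z') (Df z) < \<epsilon>"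
    using \<open>uniformly_continuous_on K Df\<close> unfolding uniformly_continuous_on_def by metis
  show "\<exists>d>0. \<forall>s t. a \<le> s \<longrightarrow> s \<le> t \<longrightarrow> t \<le> b \<longrightarrow> t - s < d \<longrightarrow>
      \<bar>f (X t) - f (X s) - integral {s..t} (\<lambda>r. X' r \<bullet> Df (X r))\<bar> \<le> e * (t - s)"
  proof (intro exI[of _ "d / (M + 1)"] conjI allI impI)
    show "d / (M + 1) > 0" using \<open>d > 0\<close> \<open>0 \<le> M\<close> by simp
    fix s t assume st: "a \<le> s" "s \<le> t" "t \<le> b" "t - s < d / (M + 1)"
    have "M * (t - s) < d"
      using st \<open>0 \<le> M\<close> mult_right_mono[of M "M + 1" "t - s"] by (simp add: less_divide_eq mult.commute)
    have "closed_segment (X s) (X t) \<subseteq> K"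
      using XK st by (intro closed_segment_subset) (auto simp: K_def)
    have near: "z \<in> K \<and> norm (z - X s) \<le> M * (t - s)"
      if "z \<in> closed_segment (X s) (X t) \<union> X ` {s..t}" for z
      using that
    proof (elim UnE imageE)
      assume "z \<in> closed_segment (X s) (X t)"
      then show ?thesis
        using \<open>closed_segment (X s) (X t) \<subseteq> K\<close> segment_bound1 incr[OF st(1-3)] by fastforce
    next
      fix r assume "r \<in> {s..t}" "z = X r"
      then show ?thesis
        using XK incr[of s r] mult_left_mono[of "r - s" "t - s" M] st \<open>0 \<le> M\<close> by auto
    qed
    have "norm (Df z - Df (X s)) \<le> \<epsilon>" if "z \<in> closed_segment (X s) (X t) \<union> X ` {s..t}" for z
    proof -
      have "dist z (X s) < d" using near[OF that] \<open>M * (t - s) < d\<close> by (simp add: dist_norm)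
      then show ?thesis using d[of "X s" z] XK st near[OF that] by (simp add: dist_norm)
    qed
    then have "\<bar>f (X t) - f (X s) - integral {s..t} (\<lambda>r. X' r \<bullet> Df (X r))\<bar> \<le> 2 * \<epsilon> * M * (t - s)"
      using st bound integrable_subinterval_real[OF int, of s t]
      by (intro increment_along_path_minus_integral[OF grad _ path]) auto
    also have "\<dots> \<le> e * (t - s)"
      using st \<open>0 \<le> M\<close> \<open>e > 0\<close> by (simp add: \<epsilon>_def field_simps)
    finally show "\<bar>f (X t) - f (X s) - integral {s..t} (\<lambda>r. X' r \<bullet> Df (X r))\<bar> \<le> e * (t - s)" .
  qed
qed

section \<open>Cylindrical test functions\<close>

lemma cyl_proj_inner: "cyl_proj e x \<bullet> w = x \<bullet> (\<Sum>i\<in>UNIV. w $ i *\<^sub>R e i)"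
  by (simp add: cyl_proj_def inner_vec_def inner_sum_right mult.commute)

lemma bounded_linear_cyl_proj: "bounded_linear (cyl_proj e)"
proof -
  have "cyl_proj e = (\<lambda>x. \<Sum>i\<in>UNIV. (x \<bullet> e i) *\<^sub>R axis i 1)"
    by (auto simp: cyl_proj_def vec_eq_iff axis_def sum_component if_distrib cong: if_cong)
  show ?thesis
    unfolding \<open>cyl_proj e = _\<close> by (intro bounded_linear_sum)
      (use bounded_linear_compose[OF bounded_linear_scaleR_left bounded_linear_inner_left] in auto)
qed

lemma real_grad_eqI:
  assumes "GDERIV f x :> D"
  shows "real_grad f x = D"
  unfolding real_grad_def
proof (rule the_equality)
  show "GDERIV f x :> D" by (rule assms)
  fix D' assume "GDERIV f x :> D'"
  then have "(\<lambda>h. h \<bullet> D') = (\<lambda>h. h \<bullet> D)"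
    using assms unfolding gderiv_def by (rule has_derivative_unique)
  then have "(D' - D) \<bullet> D' = (D' - D) \<bullet> D" by metis
  then have "(D' - D) \<bullet> (D' - D) = 0" by (simp add: inner_diff_right)
  then show "D' = D" by simp
qed

lemma Ck1_continuous_gradient:
  fixes f :: "'e::euclidean_space \<Rightarrow> real"
  assumes "Ck (Suc 0) f"
  obtains Df where "\<And>x. GDERIV f x :> Df x" and "continuous_on UNIV Df"
proof
  define Df where "Df x = (\<Sum>i\<in>Basis. frechet_derivative f (at x) i *\<^sub>R i)" for x
  show "continuous_on UNIV Df"
    using assms unfolding Df_def by (auto intro!: continuous_intros)
  fix x
  have "(f has_derivative frechet_derivative f (at x)) (at x)"
    using assms frechet_derivative_works by auto
  moreover have "frechet_derivative f (at x) = (\<lambda>h. h \<bullet> Df x)"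
  proof
    fix h
    have "linear (frechet_derivative f (at x))"
      using calculation has_derivative_linear by blast
    then have "frechet_derivative f (at x) h = (\<Sum>i\<in>Basis. (h \<bullet> i) * frechet_derivative f (at x) i)"
      by (subst euclidean_representation[symmetric, of h]) (simp add: linear_sum linear_scale)
    then show "frechet_derivative f (at x) h = h \<bullet> Df x"
      by (simp add: Df_def inner_sum_right mult.commute)
  qed
  ultimately show "GDERIV f x :> Df x"
    by (simp add: gderiv_def)
qed

lemma test_fun_vanishes:
  assumes "test_fun I \<psi>" and "t \<notin> I"
  shows "\<psi> (t, z) = 0"
proof (rule ccontr)
  assume "\<psi> (t, z) \<noteq> 0"
  then have "(t, z) \<in> closure {p. \<psi> p \<noteq> 0}" by (intro subsetD[OF closure_subset]) simp
  moreover have "closure {p. \<psi> p \<noteq> 0} \<subseteq> I \<times> UNIV"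
    using assms(1) unfolding test_fun_def by (elim conjE)
  ultimately have "(t, z) \<in> I \<times> UNIV" by (rule rev_subsetD)
  then show False using assms(2) by simp
qed

lemma liouville_integrand_eq_inner_gradient:
  fixes \<psi> :: "real \<times> (real^'n) \<Rightarrow> real" and e :: "'n::finite \<Rightarrow> 'b::real_inner"
  assumes grad: "\<And>p. GDERIV \<psi> p :> D\<psi> p"
  shows "liouville_integrand v \<iota> \<psi> e t x = (1, cyl_proj e (v t x)) \<bullet> D\<psi> (t, cyl_proj e (\<iota> x))"
proof -
  define c where "c = cyl_proj e (\<iota> x)"
  have der: "(\<psi> has_derivative (\<lambda>h. h \<bullet> D\<psi> p)) (at p)" for p
    using grad by (simp add: gderiv_def)
  have "((\<lambda>\<tau>. \<psi> (\<tau>, c)) has_derivative (\<lambda>h. (h, 0) \<bullet> D\<psi> (t, c))) (at t)"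
    by (rule has_derivative_compose[where f="\<lambda>\<tau>. (\<tau>, c)", OF _ der, simplified])
      (auto intro!: derivative_eq_intros)
  moreover have "(\<lambda>h. (h, 0) \<bullet> D\<psi> (t, c)) = (*) (fst (D\<psi> (t, c)))"
    by (auto simp: inner_prod_def)
  ultimately have "deriv (\<lambda>\<tau>. cyl_fun \<psi> e \<tau> (\<iota> x)) t = fst (D\<psi> (t, c))"
    by (intro DERIV_imp_deriv) (simp add: cyl_fun_def c_def has_field_derivative_def)
  moreover have "(cyl_fun \<psi> e t has_derivative (\<lambda>h. (0, cyl_proj e h) \<bullet> D\<psi> (t, c))) (at (\<iota> x))"
    unfolding cyl_fun_def[abs_def] c_def
    by (rule has_derivative_compose[where f="\<lambda>z. (t, cyl_proj e z)", OF _ der, simplified])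
      (auto intro!: derivative_eq_intros bounded_linear.has_derivative[OF bounded_linear_cyl_proj])
  then have "GDERIV (cyl_fun \<psi> e t) (\<iota> x) :> (\<Sum>i\<in>UNIV. snd (D\<psi> (t, c)) $ i *\<^sub>R e i)"
    by (simp add: gderiv_def cyl_proj_inner inner_prod_def)
  ultimately show ?thesis
    by (simp add: liouville_integrand_def real_grad_eqI cyl_proj_inner inner_prod_def c_def)
qed

section \<open>Weak solutions and integration tools\<close>

lemma weak_solution_has_integral:
  assumes "weak_solution \<iota> v J u" and "{s..t} \<subseteq> J" and "s \<le> t"
  shows "((\<lambda>r. v r (u r)) has_integral \<iota> (u t) - \<iota> (u s)) {s..t}"
proof -
  obtain w where w: "\<forall>s\<in>J. \<forall>t\<in>J. s \<le> t \<longrightarrow> (w has_integral \<iota> (u t) - \<iota> (u s)) {s..t}"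
    and w_ae: "AE r in lebesgue. r \<in> J \<longrightarrow> w r = v r (u r)"
    using assms(1) unfolding weak_solution_def by auto
  obtain N where N: "{r \<in> space lebesgue. \<not> (r \<in> J \<longrightarrow> w r = v r (u r))} \<subseteq> N"
    "emeasure lebesgue N = 0" "N \<in> sets lebesgue"
    by (rule AE_E[OF w_ae])
  show ?thesis
  proof (rule has_integral_spike[of N])
    show "negligible N" using N(2,3) by (simp add: negligible_iff_null_sets null_sets_def)
    have "s \<in> J" "t \<in> J" using assms(2,3) by auto
    then show "(w has_integral \<iota> (u t) - \<iota> (u s)) {s..t}"
      using w assms(3) by blast
    fix r assume r: "r \<in> {s..t} - N"
    then have "r \<in> J" using assms(2) by blast
    with r N(1) show "v r (u r) = w r" by auto
  qed
qed

lemma weak_solution_continuous: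
  assumes "weak_solution \<iota> v {a..b} u" and bound: "\<And>r. r \<in> {a..b} \<Longrightarrow> norm (v r (u r)) \<le> M"
  shows "continuous_on {a..b} (\<lambda>t. \<iota> (u t))"
proof (cases "a \<le> b")
  case True
  then have "0 \<le> M" using order_trans[OF norm_ge_zero bound[of a]] by simp
  have "dist (\<iota> (u t)) (\<iota> (u s)) \<le> M * dist t s" if "a \<le> s" "s \<le> t" "t \<le> b" for s t
    using has_integral_bound_real[OF \<open>0 \<le> M\<close> finite.emptyI
        weak_solution_has_integral[OF assms(1), of s t]] bound that
    by (auto simp: dist_norm dist_real_def)
  then have "M-lipschitz_on {a..b} (\<lambda>t. \<iota> (u t))"
    using \<open>0 \<le> M\<close> by (intro lipschitz_onI; metis atLeastAtMost_iff dist_commute linorder_le_cases)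
  then show ?thesis by (rule lipschitz_on_continuous_on)
qed simp

lemma distr_restrict_space_AE_eq:
  assumes "AE x in M. x \<in> A" and "A \<in> sets M" and g: "g \<in> measurable M N"
    and eq: "\<And>x. x \<in> A \<Longrightarrow> f x = g x"
  shows "distr (restrict_space M A) N f = distr M N g"
proof (rule measure_eqI)
  have f: "f \<in> measurable (restrict_space M A) N"
    using measurable_restrict_space1[OF g] by (rule measurable_cong[THEN iffD1, rotated])
      (simp add: eq space_restrict_space)
  fix X assume "X \<in> sets (distr (restrict_space M A) N f)"
  then have X: "X \<in> sets N" by simp
  have "emeasure (distr (restrict_space M A) N f) X = emeasure M (f -` X \<inter> (A \<inter> space M))"
    using assms(2) by (simp add: emeasure_distr[OF f X] space_restrict_space emeasure_restrict_space
        Int_absorb2 sets.sets_into_space)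
  also have "f -` X \<inter> (A \<inter> space M) = (g -` X \<inter> space M) \<inter> A"
    using eq by auto
  also have "emeasure M \<dots> = emeasure M (g -` X \<inter> space M)"
    using assms(1,2) measurable_sets[OF g X] by (intro emeasure_eq_AE) auto
  finally show "emeasure (distr (restrict_space M A) N f) X = emeasure (distr M N g) X"
    by (simp add: emeasure_distr[OF g X])
qed simp

lemma continuous_on_integral_bounded:
  fixes g :: "real \<Rightarrow> 'a \<Rightarrow> real"
  assumes "finite_measure M"
    and meas: "\<And>t. t \<in> U \<Longrightarrow> g t \<in> borel_measurable M"
    and bound: "\<And>t y. t \<in> U \<Longrightarrow> y \<in> space M \<Longrightarrow> \<bar>g t y\<bar> \<le> B"
    and cont: "AE y in M. continuous_on U (\<lambda>t. g t y)"
  shows "continuous_on U (\<lambda>t. \<integral>y. g t y \<partial>M)"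
proof (rule continuous_on_sequentiallyI)
  fix X t assume X: "\<forall>n. X n \<in> U" and "t \<in> U" and "X \<longlonglongrightarrow> t"
  show "(\<lambda>n. \<integral>y. g (X n) y \<partial>M) \<longlonglongrightarrow> (\<integral>y. g t y \<partial>M)"
  proof (rule integral_dominated_convergence[where w="\<lambda>_. B"])
    show "integrable M (\<lambda>_. B)" using \<open>finite_measure M\<close> by (simp add: finite_measure.integrable_const)
    show "g t \<in> borel_measurable M" "\<And>n. g (X n) \<in> borel_measurable M"
      using meas X \<open>t \<in> U\<close> by auto
    show "AE y in M. norm (g (X n) y) \<le> B" for n
      using bound X by auto
    show "AE y in M. (\<lambda>n. g (X n) y) \<longlonglongrightarrow> g t y"
      using cont by eventually_elim
        (use X \<open>t \<in> U\<close> \<open>X \<longlonglongrightarrow> t\<close> in \<open>auto simp: continuous_on_sequentially o_def\<close>)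
  qed
qed

lemma integral_lborel_eq_zero_if_sections_zero:
  fixes H :: "real \<times> 'a \<Rightarrow> real"
  assumes "finite_measure M" and meas: "H \<in> borel_measurable (lborel \<Otimes>\<^sub>M M)"
    and bound: "\<And>t y. \<bar>H (t, y)\<bar> \<le> C * indicator {a..b} t"
    and sections: "\<And>y. y \<in> space M \<Longrightarrow> (\<integral>t. H (t, y) \<partial>lborel) = 0"
  shows "integrable lborel (\<lambda>t. \<integral>y. H (t, y) \<partial>M)" and "(\<integral>t. (\<integral>y. H (t, y) \<partial>M) \<partial>lborel) = 0"
proof -
  interpret M: finite_measure M by (rule assms(1))
  interpret pair_sigma_finite lborel M ..
  have "emeasure (lborel \<Otimes>\<^sub>M M) ({a..b} \<times> space M) = emeasure lborel {a..b} * emeasure M (space M)"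
    by (rule M.emeasure_pair_measure_Times) auto
  moreover have "emeasure lborel {a..b} < \<infinity>" by (cases "a \<le> b") auto
  moreover have "emeasure M (space M) < \<infinity>" by (simp add: less_top[symmetric])
  ultimately have "integrable (lborel \<Otimes>\<^sub>M M) (indicator ({a..b} \<times> space M) :: _ \<Rightarrow> real)"
    by (intro integrable_real_indicator) (auto simp: ennreal_mult_less_top)
  then have H: "integrable (lborel \<Otimes>\<^sub>M M) H"
  proof (rule Bochner_Integration.integrable_bound[OF integrable_mult_right meas])
    show "AE p in lborel \<Otimes>\<^sub>M M. norm (H p) \<le> norm (C * indicator ({a..b} \<times> space M) p)"
    proof (rule AE_I2)
      fix p :: "real \<times> 'a" assume "p \<in> space (lborel \<Otimes>\<^sub>M M)"
      then obtain t y where p: "p = (t, y)" "y \<in> space M" by (auto simp: space_pair_measure)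
      show "norm (H p) \<le> norm (C * indicator ({a..b} \<times> space M) p)"
        using bound[of t y] p by (auto simp: indicator_def)
    qed
  qed
  show "integrable lborel (\<lambda>t. \<integral>y. H (t, y) \<partial>M)"
    by (rule integrable_fst'[OF H])
  have "(\<integral>t. (\<integral>y. H (t, y) \<partial>M) \<partial>lborel) = integral\<^sup>L (lborel \<Otimes>\<^sub>M M) H"
    by (rule integral_fst'[OF H])
  also have "\<dots> = (\<integral>y. (\<integral>t. H (t, y) \<partial>lborel) \<partial>M)"
    using integral_snd[of "\<lambda>t y. H (t, y)"] H by simp
  also have "\<dots> = (\<integral>y. 0 \<partial>M)"
    by (rule Bochner_Integration.integral_cong) (simp_all add: sections)
  finally show "(\<integral>t. (\<integral>y. H (t, y) \<partial>M) \<partial>lborel) = 0" by simp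
qed

lemma set_integral_Ioo_eq_integral_Icc:
  fixes F :: "real \<Rightarrow> real"
  assumes "F \<in> borel_measurable borel" and bound: "\<And>t. t \<in> {a<..<b} \<Longrightarrow> \<bar>F t\<bar> \<le> C"
  shows "(LINT t:{a<..<b}|lborel. F t) = integral {a..b} F"
proof -
  have "emeasure lborel {a<..<b} < \<infinity>"
    by (cases "a \<le> b") auto
  then have "integrable lborel (\<lambda>t. C * indicator {a<..<b} t :: real)"
    by (intro integrable_mult_right integrable_real_indicator) auto
  then have "set_integrable lborel {a<..<b} F"
    unfolding set_integrable_def
  proof (rule Bochner_Integration.integrable_bound)
    show "(\<lambda>t. indicator {a<..<b} t *\<^sub>R F t) \<in> borel_measurable lborel"
      using assms(1) by (intro borel_measurable_scaleR borel_measurable_indicator) auto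
    show "AE t in lborel. norm (indicator {a<..<b} t *\<^sub>R F t) \<le> norm (C * indicator {a<..<b} t)"
      using bound by (intro AE_I2) (force simp: indicator_def)
  qed
  then show ?thesis
    by (simp add: set_borel_integral_eq_integral(2) integral_open_interval_real)
qed

section \<open>The flow of weak solutions and its push-forwards\<close>

locale weak_solution_flow =
  fixes \<iota> :: "'a::{real_inner, polish_space} \<Rightarrow> 'b::{real_inner, polish_space}"
    and v :: "real \<Rightarrow> 'a \<Rightarrow> 'b"
    and a b :: real
    and A :: "'a set"
    and \<phi> :: "real \<Rightarrow> 'a \<Rightarrow> 'a"
  assumes bounded_linear_\<iota>: "bounded_linear \<iota>"
    and v_borel: "(\<lambda>p. v (fst p) (snd p)) \<in> borel_measurable borel"
    and v_bounded: "\<And>B. bounded B \<Longrightarrow> bounded ((\<lambda>p. v (fst p) (snd p)) ` B)"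
    and a_le_b: "a \<le> b"
    and A_borel: "A \<in> sets borel"
    and \<phi>_borel: "(\<lambda>p. \<phi> (fst p) (snd p)) \<in> borel_measurable (restrict_space borel ({a..b} \<times> A))"
    and \<phi>_bounded: "\<And>B. B \<subseteq> {a..b} \<times> A \<Longrightarrow> bounded B \<Longrightarrow> bounded ((\<lambda>p. \<phi> (fst p) (snd p)) ` B)"
    and \<phi>_solves: "\<And>x. x \<in> A \<Longrightarrow> weak_solution \<iota> v {a..b} (\<lambda>t. \<phi> t x)"
begin

text \<open>Extending the flow by \<open>0\<close> outside \<open>{a..b} \<times> A\<close> gives a Borel map on the whole space,
  so the push-forwards can be computed as integrals against \<open>\<nu>\<close> itself.\<close>

definition flow_ext :: "real \<times> 'a \<Rightarrow> 'a" where
  "flow_ext p = (if p \<in> {a..b} \<times> A then \<phi> (fst p) (snd p) else 0)"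

lemma flow_ext_eq [simp]: "t \<in> {a..b} \<Longrightarrow> x \<in> A \<Longrightarrow> flow_ext (t, x) = \<phi> t x"
  by (simp add: flow_ext_def)

lemma flow_ext_borel: "flow_ext \<in> borel_measurable borel"
proof -
  have "{a..b} \<times> A \<in> sets (borel :: (real \<times> 'a) measure)"
    using A_borel by (intro borel_Times) auto
  then show ?thesis
    using \<phi>_borel unfolding flow_ext_def by (subst (asm) measurable_restrict_space_iff) auto
qed

lemma trajectory_bounds:
  assumes "Y \<subseteq> A" and "bounded Y"
  obtains V where "\<And>r y. r \<in> {a..b} \<Longrightarrow> y \<in> Y \<Longrightarrow> norm (\<phi> r y) \<le> V \<and> norm (v r (\<phi> r y)) \<le> V"
proof -
  define P where "P = (\<lambda>p. \<phi> (fst p) (snd p)) ` ({a..b} \<times> Y)"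
  have "bounded P"
    unfolding P_def using assms by (intro \<phi>_bounded bounded_Times) auto
  then have "bounded ({a..b} \<times> P)" by (intro bounded_Times) auto
  then have "bounded ((\<lambda>p. v (fst p) (snd p)) ` ({a..b} \<times> P))" by (rule v_bounded)
  then obtain V2 where V2: "\<And>w. w \<in> (\<lambda>p. v (fst p) (snd p)) ` ({a..b} \<times> P) \<Longrightarrow> norm w \<le> V2"
    unfolding bounded_iff by blast
  obtain V1 where V1: "\<And>x. x \<in> P \<Longrightarrow> norm x \<le> V1"
    using \<open>bounded P\<close> unfolding bounded_iff by blast
  show ?thesis
  proof (rule that, intro conjI)
    fix r y assume "r \<in> {a..b}" "y \<in> Y"
    then have "\<phi> r y \<in> P" by (force simp: P_def)
    with \<open>r \<in> {a..b}\<close> show "norm (\<phi> r y) \<le> max V1 V2" "norm (v r (\<phi> r y)) \<le> max V1 V2"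
      using V1 V2[of "v r (\<phi> r y)"] by force+
  qed
qed

lemma trajectory_has_integral:
  assumes "x \<in> A" "a \<le> s" "s \<le> t" "t \<le> b"
  shows "((\<lambda>r. v r (\<phi> r x)) has_integral \<iota> (\<phi> t x) - \<iota> (\<phi> s x)) {s..t}"
  using assms by (intro weak_solution_has_integral[OF \<phi>_solves]) auto

lemma trajectory_continuous:
  assumes "x \<in> A"
  shows "continuous_on {a..b} (\<lambda>t. \<iota> (\<phi> t x))"
proof -
  obtain V where "\<And>r y. r \<in> {a..b} \<Longrightarrow> y \<in> {x} \<Longrightarrow> norm (\<phi> r y) \<le> V \<and> norm (v r (\<phi> r y)) \<le> V"
    by (rule trajectory_bounds[of "{x}"]) (use assms in auto)
  then have "\<And>r. r \<in> {a..b} \<Longrightarrow> norm (v r (\<phi> r x)) \<le> V" by blast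
  then show ?thesis by (rule weak_solution_continuous[OF \<phi>_solves[OF assms]])
qed

lemma liouville_integrand_borel:
  fixes \<psi> :: "real \<times> (real^'n) \<Rightarrow> real" and e :: "'n::finite \<Rightarrow> 'b"
  assumes grad: "\<And>p. GDERIV \<psi> p :> D\<psi> p" and cont: "continuous_on UNIV D\<psi>"
  shows "(\<lambda>p. liouville_integrand v \<iota> \<psi> e (fst p) (snd p)) \<in> borel_measurable borel"
proof -
  define K where "K q = (1::real, cyl_proj e (fst (snd q))) \<bullet> D\<psi> (fst q, cyl_proj e (\<iota> (snd (snd q))))"
    for q :: "real \<times> 'b \<times> 'a"
  have cont_\<pi>: "continuous_on UNIV (cyl_proj e)"
    by (rule linear_continuous_on[OF bounded_linear_cyl_proj])
  have cont_\<iota>: "continuous_on UNIV \<iota>"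
    by (rule linear_continuous_on[OF bounded_linear_\<iota>])
  have "continuous_on UNIV K"
    unfolding K_def
    by (intro continuous_intros continuous_on_compose2[OF cont] continuous_on_compose2[OF cont_\<pi>]
        continuous_on_compose2[OF cont_\<iota>]) auto
  then have "K \<in> borel_measurable borel" by (rule borel_measurable_continuous_onI)
  have fst: "fst \<in> borel_measurable (borel :: (real \<times> 'a) measure)"
    and snd: "snd \<in> borel_measurable (borel :: (real \<times> 'a) measure)"
    by (intro borel_measurable_continuous_onI continuous_intros)+
  from measurable_Pair[OF fst measurable_Pair[OF v_borel snd]]
  have "(\<lambda>p. (fst p, v (fst p) (snd p), snd p)) \<in> borel_measurable borel"
    by (simp add: borel_prod)
  with \<open>K \<in> borel_measurable borel\<close>
  have "(\<lambda>p. K (fst p, v (fst p) (snd p), snd p)) \<in> borel_measurable borel"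
    using measurable_compose by blast
  then show ?thesis
    by (simp add: K_def liouville_integrand_eq_inner_gradient[OF grad])
qed

lemma liouville_integrand_flow_borel:
  fixes \<psi> :: "real \<times> (real^'n) \<Rightarrow> real" and e :: "'n::finite \<Rightarrow> 'b"
  assumes grad: "\<And>p. GDERIV \<psi> p :> D\<psi> p" and cont: "continuous_on UNIV D\<psi>"
  shows "(\<lambda>p. liouville_integrand v \<iota> \<psi> e (fst p) (flow_ext p)) \<in> borel_measurable borel"
proof -
  have "fst \<in> borel_measurable (borel :: (real \<times> 'a) measure)"
    by (intro borel_measurable_continuous_onI continuous_intros)
  from measurable_Pair[OF this flow_ext_borel]
  have "(\<lambda>p. (fst p, flow_ext p)) \<in> borel_measurable borel" by (simp add: borel_prod)
  from measurable_compose[OF this liouville_integrand_borel[OF grad cont, of e]]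
  show ?thesis by simp
qed

lemma liouville_integrand_time_section_borel:
  fixes \<psi> :: "real \<times> (real^'n) \<Rightarrow> real" and e :: "'n::finite \<Rightarrow> 'b"
  assumes grad: "\<And>p. GDERIV \<psi> p :> D\<psi> p" and cont: "continuous_on UNIV D\<psi>"
  shows "liouville_integrand v \<iota> \<psi> e t \<in> borel_measurable borel"
    and "(\<lambda>r. liouville_integrand v \<iota> \<psi> e r (flow_ext (r, x))) \<in> borel_measurable borel"
proof -
  have "(\<lambda>x. (t, x)) \<in> borel_measurable borel" "(\<lambda>r. (r, x)) \<in> borel_measurable borel"
    by (intro borel_measurable_continuous_onI continuous_intros)+
  from measurable_compose[OF this(1) liouville_integrand_borel[OF grad cont, of e]]
    measurable_compose[OF this(2) liouville_integrand_flow_borel[OF grad cont, of e]]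
  show "liouville_integrand v \<iota> \<psi> e t \<in> borel_measurable borel"
    and "(\<lambda>r. liouville_integrand v \<iota> \<psi> e r (flow_ext (r, x))) \<in> borel_measurable borel"
    by simp_all
qed

lemma liouville_integrand_flow_bounded:
  fixes \<psi> :: "real \<times> (real^'n) \<Rightarrow> real" and e :: "'n::finite \<Rightarrow> 'b"
  assumes grad: "\<And>p. GDERIV \<psi> p :> D\<psi> p" and cont: "continuous_on UNIV D\<psi>"
    and "Y \<subseteq> A" and "bounded Y"
  obtains C where "\<And>r y. r \<in> {a..b} \<Longrightarrow> y \<in> Y \<Longrightarrow> \<bar>liouville_integrand v \<iota> \<psi> e r (\<phi> r y)\<bar> \<le> C"
proof -
  obtain V where V: "\<And>r y. r \<in> {a..b} \<Longrightarrow> y \<in> Y \<Longrightarrow> norm (\<phi> r y) \<le> V \<and> norm (v r (\<phi> r y)) \<le> V"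
    using trajectory_bounds[OF assms(3,4)] by blast
  obtain K\<pi> where K\<pi>: "K\<pi> > 0" "\<And>x. norm (cyl_proj e x) \<le> norm x * K\<pi>"
    using bounded_linear.pos_bounded[OF bounded_linear_cyl_proj] by blast
  obtain K\<iota> where K\<iota>: "K\<iota> > 0" "\<And>x. norm (\<iota> x) \<le> norm x * K\<iota>"
    using bounded_linear.pos_bounded[OF bounded_linear_\<iota>] by blast
  define Q where "Q = V * K\<iota> * K\<pi>"
  have "compact ({a..b} \<times> cball (0::real^'n) Q)" by (intro compact_Times) auto
  then have "bounded (D\<psi> ` ({a..b} \<times> cball 0 Q))"
    by (intro compact_imp_bounded compact_continuous_image continuous_on_subset[OF cont]) auto
  then obtain CD where CD: "\<And>p. p \<in> {a..b} \<times> cball 0 Q \<Longrightarrow> norm (D\<psi> p) \<le> CD"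
    unfolding bounded_iff by blast
  show ?thesis
  proof (rule that)
    fix r y assume r: "r \<in> {a..b}" and y: "y \<in> Y"
    note V_ry = V[OF r y]
    have "norm (cyl_proj e (\<iota> (\<phi> r y))) \<le> norm (\<phi> r y) * K\<iota> * K\<pi>"
      using K\<pi> K\<iota>(2)[of "\<phi> r y"] by (meson mult_right_mono less_imp_le order_trans)
    also have "\<dots> \<le> Q"
      unfolding Q_def using V_ry K\<pi>(1) K\<iota>(1) by (intro mult_right_mono) auto
    finally have "norm (D\<psi> (r, cyl_proj e (\<iota> (\<phi> r y)))) \<le> CD"
      using r by (intro CD) auto
    moreover have "norm (v r (\<phi> r y)) * K\<pi> \<le> V * K\<pi>"
      using V_ry K\<pi>(1) by (intro mult_right_mono) auto
    then have "norm (1::real, cyl_proj e (v r (\<phi> r y))) \<le> 1 + V * K\<pi>"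
      using norm_Pair_le[of "1::real" "cyl_proj e (v r (\<phi> r y))"] K\<pi>(2)[of "v r (\<phi> r y)"]
      by simp
    ultimately have "norm (1::real, cyl_proj e (v r (\<phi> r y))) * norm (D\<psi> (r, cyl_proj e (\<iota> (\<phi> r y))))
        \<le> (1 + V * K\<pi>) * CD"
      by (intro mult_mono) (auto intro: order_trans[OF norm_ge_zero])
    then show "\<bar>liouville_integrand v \<iota> \<psi> e r (\<phi> r y)\<bar> \<le> (1 + V * K\<pi>) * CD"
      unfolding liouville_integrand_eq_inner_gradient[OF grad]
      by (meson Cauchy_Schwarz_ineq2 order_trans)
  qed
qed

lemma liouville_integrand_flow_integrable:
  fixes \<psi> :: "real \<times> (real^'n) \<Rightarrow> real" and e :: "'n::finite \<Rightarrow> 'b"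
  assumes grad: "\<And>p. GDERIV \<psi> p :> D\<psi> p" and cont: "continuous_on UNIV D\<psi>" and "x \<in> A"
  shows "(\<lambda>r. liouville_integrand v \<iota> \<psi> e r (\<phi> r x)) integrable_on {a..b}"
proof -
  obtain C where C: "\<And>r y. r \<in> {a..b} \<Longrightarrow> y \<in> {x} \<Longrightarrow> \<bar>liouville_integrand v \<iota> \<psi> e r (\<phi> r y)\<bar> \<le> C"
    by (rule liouville_integrand_flow_bounded[OF grad cont, of "{x}"]) (use \<open>x \<in> A\<close> in auto)
  have "(\<lambda>r. liouville_integrand v \<iota> \<psi> e r (flow_ext (r, x))) \<in> borel_measurable lebesgue"
    using liouville_integrand_time_section_borel(2)[OF grad cont, of e x]
    by (intro measurable_completion) simp
  then have "(\<lambda>r. liouville_integrand v \<iota> \<psi> e r (flow_ext (r, x))) integrable_on {a..b}"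
  proof (rule measurable_bounded_lemma[OF _ integrable_const[of C a b], unfolded cbox_interval])
    fix r :: real assume "r \<in> {a..b}"
    then show "norm (liouville_integrand v \<iota> \<psi> e r (flow_ext (r, x))) \<le> C"
      using C[of r x] \<open>x \<in> A\<close> by simp
  qed
  then show ?thesis
    by (rule integrable_eq) (use \<open>x \<in> A\<close> in auto)
qed

lemma liouville_integrand_flow_has_integral_zero:
  fixes \<psi> :: "real \<times> (real^'n) \<Rightarrow> real" and e :: "'n::finite \<Rightarrow> 'b"
  assumes grad: "\<And>p. GDERIV \<psi> p :> D\<psi> p" and cont: "continuous_on UNIV D\<psi>"
    and vanish: "\<And>z. \<psi> (a, z) = 0" "\<And>z. \<psi> (b, z) = 0" and "x \<in> A"
  shows "((\<lambda>r. liouville_integrand v \<iota> \<psi> e r (\<phi> r x)) has_integral 0) {a..b}"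
proof -
  define p where "p r = cyl_proj e (\<iota> (\<phi> r x))" for r
  define q where "q r = cyl_proj e (v r (\<phi> r x))" for r
  obtain V where V: "\<And>r y. r \<in> {a..b} \<Longrightarrow> y \<in> {x} \<Longrightarrow> norm (\<phi> r y) \<le> V \<and> norm (v r (\<phi> r y)) \<le> V"
    by (rule trajectory_bounds[of "{x}"]) (use \<open>x \<in> A\<close> in auto)
  obtain K where K: "K > 0" "\<And>w. norm (cyl_proj e w) \<le> norm w * K"
    using bounded_linear.pos_bounded[OF bounded_linear_cyl_proj] by blast
  have "((\<lambda>r. (1, q r) \<bullet> D\<psi> (r, p r)) has_integral \<psi> (b, p b) - \<psi> (a, p a)) {a..b}"
  proof (rule has_integral_gradient_along_path[OF grad cont a_le_b, where X = "\<lambda>r. (r, p r)"])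
    show "norm (1::real, q r) \<le> 1 + V * K" if "r \<in> {a..b}" for r
    proof -
      have "norm (v r (\<phi> r x)) * K \<le> V * K"
        using V[OF that] K(1) by (intro mult_right_mono) auto
      then show ?thesis
        using norm_Pair_le[of "1::real" "q r"] K(2)[of "v r (\<phi> r x)"] unfolding q_def by simp
    qed
    show "((\<lambda>r. (1, q r)) has_integral (t, p t) - (s, p s)) {s..t}"
      if "a \<le> s" "s \<le> t" "t \<le> b" for s t
    proof -
      have "((\<lambda>r. (0, q r)) has_integral (0, p t - p s)) {s..t}"
        using has_integral_linear[OF trajectory_has_integral[OF \<open>x \<in> A\<close> that]
            bounded_linear_Pair[OF bounded_linear_zero bounded_linear_cyl_proj]]
        by (simp add: o_def p_def q_def linear_diff[OF bounded_linear.linear[OF bounded_linear_cyl_proj]])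
      from has_integral_add[OF has_integral_const_real[of "(1::real, 0)" s t] this]
      show ?thesis using that by simp
    qed
    show "(\<lambda>r. (1, q r) \<bullet> D\<psi> (r, p r)) integrable_on {a..b}"
      using liouville_integrand_flow_integrable[OF grad cont \<open>x \<in> A\<close>]
      by (simp add: liouville_integrand_eq_inner_gradient[OF grad] p_def q_def)
  qed
  then show ?thesis
    by (simp add: liouville_integrand_eq_inner_gradient[OF grad] vanish p_def q_def)
qed

lemma liouville_integrand_flow_set_integral_zero:
  fixes \<psi> :: "real \<times> (real^'n) \<Rightarrow> real" and e :: "'n::finite \<Rightarrow> 'b"
  assumes grad: "\<And>p. GDERIV \<psi> p :> D\<psi> p" and cont: "continuous_on UNIV D\<psi>"
    and vanish: "\<And>z. \<psi> (a, z) = 0" "\<And>z. \<psi> (b, z) = 0" and "x \<in> A"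
  shows "(LINT r:{a<..<b}|lborel. liouville_integrand v \<iota> \<psi> e r (flow_ext (r, x))) = 0"
proof -
  obtain C where C: "\<And>r y. r \<in> {a..b} \<Longrightarrow> y \<in> {x} \<Longrightarrow> \<bar>liouville_integrand v \<iota> \<psi> e r (\<phi> r y)\<bar> \<le> C"
    by (rule liouville_integrand_flow_bounded[OF grad cont, of "{x}"]) (use \<open>x \<in> A\<close> in auto)
  have "(LINT r:{a<..<b}|lborel. liouville_integrand v \<iota> \<psi> e r (flow_ext (r, x)))
      = integral {a..b} (\<lambda>r. liouville_integrand v \<iota> \<psi> e r (flow_ext (r, x)))"
    using C \<open>x \<in> A\<close>
    by (intro set_integral_Ioo_eq_integral_Icc[OF liouville_integrand_time_section_borel(2)[OF grad cont],
          where C = C]) auto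
  also have "\<dots> = integral {a..b} (\<lambda>r. liouville_integrand v \<iota> \<psi> e r (\<phi> r x))"
    using \<open>x \<in> A\<close> by (intro integral_cong) auto
  also have "\<dots> = 0"
    by (rule integral_unique[OF liouville_integrand_flow_has_integral_zero[OF grad cont vanish \<open>x \<in> A\<close>]])
  finally show ?thesis .
qed

end

locale weak_solution_flow_pushforward = weak_solution_flow +
  fixes \<nu> :: "'a measure" and R :: real
  assumes prob_space_\<nu>: "prob_space \<nu>"
    and sets_\<nu>: "sets \<nu> = sets borel"
    and \<nu>_A: "AE x in \<nu>. x \<in> A"
    and \<nu>_bounded: "AE x in \<nu>. norm x \<le> R"
begin

lemma flow_ext_section_measurable: "(\<lambda>y. flow_ext (t, y)) \<in> borel_measurable \<nu>"
proof -
  have "(\<lambda>y::'a. (t, y)) \<in> borel_measurable borel"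
    by (intro borel_measurable_continuous_onI continuous_intros)
  from measurable_compose[OF this flow_ext_borel] show ?thesis
    by (simp add: measurable_cong_sets[OF sets_\<nu> refl])
qed

lemma pushforward_eq_distr:
  assumes "t \<in> {a..b}"
  shows "distr (restrict_space \<nu> A) borel (\<phi> t) = distr \<nu> borel (\<lambda>y. flow_ext (t, y))"
  using A_borel sets_\<nu> assms
  by (intro distr_restrict_space_AE_eq[OF \<nu>_A _ flow_ext_section_measurable]) auto

lemma pushforward_initial:
  assumes "\<And>x. x \<in> A \<Longrightarrow> \<phi> t\<^sub>0 x = x"
  shows "distr (restrict_space \<nu> A) borel (\<phi> t\<^sub>0) = \<nu>"
proof -
  have "distr (restrict_space \<nu> A) borel (\<phi> t\<^sub>0) = distr \<nu> borel (\<lambda>x. x)"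
    using A_borel sets_\<nu> assms
    by (intro distr_restrict_space_AE_eq[OF \<nu>_A]) (auto simp: measurable_cong_sets[OF sets_\<nu> refl])
  then show ?thesis by (simp add: distr_id2 sets_\<nu>)
qed

lemma prob_space_pushforward:
  assumes "t \<in> {a..b}"
  shows "prob_space (distr (distr (restrict_space \<nu> A) borel (\<phi> t)) borel \<iota>)"
proof -
  have "\<iota> \<in> borel_measurable borel"
    by (intro borel_measurable_continuous_onI linear_continuous_on bounded_linear_\<iota>)
  then show ?thesis
    unfolding pushforward_eq_distr[OF assms]
    by (intro prob_space.prob_space_distr[OF prob_space.prob_space_distr[OF prob_space_\<nu>]]
        flow_ext_section_measurable) simp
qed

lemma integral_pushforward:
  fixes f :: "'b \<Rightarrow> real"
  assumes "t \<in> {a..b}" and f: "f \<in> borel_measurable borel"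
  shows "(LINT y|distr (distr (restrict_space \<nu> A) borel (\<phi> t)) borel \<iota>. f y)
      = (\<integral>y. f (\<iota> (flow_ext (t, y))) \<partial>\<nu>)"
proof -
  have \<iota>_borel: "\<iota> \<in> borel_measurable borel"
    by (intro borel_measurable_continuous_onI linear_continuous_on bounded_linear_\<iota>)
  have "(LINT y|distr (distr \<nu> borel (\<lambda>y. flow_ext (t, y))) borel \<iota>. f y)
      = (LINT x|distr \<nu> borel (\<lambda>y. flow_ext (t, y)). f (\<iota> x))"
    by (rule integral_distr[OF _ f]) (simp add: \<iota>_borel)
  also have "\<dots> = (\<integral>y. f (\<iota> (flow_ext (t, y))) \<partial>\<nu>)"
    using measurable_compose[OF \<iota>_borel f] by (intro integral_distr[OF flow_ext_section_measurable]) simp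
  finally show ?thesis
    using assms(1) by (simp add: pushforward_eq_distr)
qed

lemma strongly_narrowly_continuous_pushforward:
  "strongly_narrowly_continuous {a<..<b} \<iota> (\<lambda>t. distr (restrict_space \<nu> A) borel (\<phi> t))"
  unfolding strongly_narrowly_continuous_def
proof (intro allI impI)
  fix f :: "'b \<Rightarrow> real" assume f: "continuous_on UNIV f \<and> bounded (range f)"
  then obtain B where B: "\<And>x. \<bar>f x\<bar> \<le> B" unfolding bounded_iff by auto
  interpret prob_space \<nu> by (rule prob_space_\<nu>)
  have cont_f: "continuous_on UNIV f" using f by blast
  have cont_f\<iota>: "continuous_on UNIV (\<lambda>x. f (\<iota> x))"
    by (rule continuous_on_compose2[OF cont_f linear_continuous_on[OF bounded_linear_\<iota>]]) auto
  have f\<iota>_borel: "(\<lambda>x. f (\<iota> x)) \<in> borel_measurable borel"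
    by (rule borel_measurable_continuous_onI[OF cont_f\<iota>])
  have integral_eq: "(LINT y|distr (distr (restrict_space \<nu> A) borel (\<phi> t)) borel \<iota>. f y)
      = (\<integral>y. f (\<iota> (flow_ext (t, y))) \<partial>\<nu>)" if "t \<in> {a<..<b}" for t
    using that borel_measurable_continuous_onI[OF cont_f] by (intro integral_pushforward) auto
  have "continuous_on {a<..<b} (\<lambda>t. \<integral>y. f (\<iota> (flow_ext (t, y))) \<partial>\<nu>)"
  proof (rule continuous_on_integral_bounded[OF finite_measure_axioms])
    show "(\<lambda>y. f (\<iota> (flow_ext (t, y)))) \<in> borel_measurable \<nu>" for t
      using measurable_compose[OF flow_ext_section_measurable f\<iota>_borel] .
    show "\<bar>f (\<iota> (flow_ext (t, y)))\<bar> \<le> B" for t y by (rule B)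
    show "AE y in \<nu>. continuous_on {a<..<b} (\<lambda>t. f (\<iota> (flow_ext (t, y))))"
      using \<nu>_A
    proof eventually_elim
      fix y assume "y \<in> A"
      then have "continuous_on {a<..<b} (\<lambda>t. \<iota> (\<phi> t y))"
        by (rule continuous_on_subset[OF trajectory_continuous]) auto
      then have "continuous_on {a<..<b} (\<lambda>t. f (\<iota> (\<phi> t y)))"
        by (rule continuous_on_compose2[OF cont_f]) auto
      then show "continuous_on {a<..<b} (\<lambda>t. f (\<iota> (flow_ext (t, y))))"
        by (rule continuous_on_eq) (use \<open>y \<in> A\<close> in auto)
    qed
  qed
  then show "continuous_on {a<..<b}
      (\<lambda>t. LINT y|distr (distr (restrict_space \<nu> A) borel (\<phi> t)) borel \<iota>. f y)"
    by (rule continuous_on_eq) (simp add: integral_eq)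
qed

text \<open>\<open>\<nu>\<close> is carried by \<open>core\<close>, on which the trajectories, and hence the Liouville integrand
  along them, are uniformly bounded.\<close>

definition core :: "'a set" where
  "core = A \<inter> cball 0 R"

lemma AE_core: "AE y in \<nu>. y \<in> core"
  using \<nu>_A \<nu>_bounded by eventually_elim (simp add: core_def)

lemma core_borel: "core \<in> sets borel"
  using A_borel by (simp add: core_def)

lemma core_subset: "core \<subseteq> A" and bounded_core: "bounded core"
  by (auto simp: core_def)

lemma sets_lborel_pair_\<nu>: "sets (lborel \<Otimes>\<^sub>M \<nu>) = sets (borel :: (real \<times> 'a) measure)"
proof -
  have "sets (lborel \<Otimes>\<^sub>M \<nu>) = sets (borel \<Otimes>\<^sub>M (borel :: 'a measure))"
    by (rule sets_pair_measure_cong[OF sets_lborel sets_\<nu>])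
  then show ?thesis by (simp only: borel_prod)
qed

lemma liouville_integrand_pushforward:
  fixes \<psi> :: "real \<times> (real^'n) \<Rightarrow> real" and e :: "'n::finite \<Rightarrow> 'b"
  assumes grad: "\<And>p. GDERIV \<psi> p :> D\<psi> p" and cont: "continuous_on UNIV D\<psi>" and "t \<in> {a..b}"
  shows "integrable (distr (restrict_space \<nu> A) borel (\<phi> t)) (liouville_integrand v \<iota> \<psi> e t)"
    and "(LINT x|distr (restrict_space \<nu> A) borel (\<phi> t). liouville_integrand v \<iota> \<psi> e t x)
      = (\<integral>y. indicator core y * liouville_integrand v \<iota> \<psi> e t (flow_ext (t, y)) \<partial>\<nu>)"
proof -
  interpret prob_space \<nu> by (rule prob_space_\<nu>)
  obtain C where C: "\<And>r y. r \<in> {a..b} \<Longrightarrow> y \<in> core \<Longrightarrow> \<bar>liouville_integrand v \<iota> \<psi> e r (\<phi> r y)\<bar> \<le> C"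
    using liouville_integrand_flow_bounded[OF grad cont core_subset bounded_core] by blast
  note LI_borel = liouville_integrand_time_section_borel(1)[OF grad cont, of e t]
  have AE_eq: "AE y in \<nu>. liouville_integrand v \<iota> \<psi> e t (flow_ext (t, y))
      = indicator core y * liouville_integrand v \<iota> \<psi> e t (flow_ext (t, y))"
    using AE_core by eventually_elim simp
  have LI_flow_borel: "(\<lambda>y. liouville_integrand v \<iota> \<psi> e t (flow_ext (t, y))) \<in> borel_measurable \<nu>"
    by (rule measurable_compose[OF flow_ext_section_measurable LI_borel])
  have "integrable \<nu> (\<lambda>y. indicator core y * liouville_integrand v \<iota> \<psi> e t (flow_ext (t, y)))"
  proof (rule integrable_const_bound)
    show "AE y in \<nu>. norm (indicator core y * liouville_integrand v \<iota> \<psi> e t (flow_ext (t, y))) \<le> max 0 C"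
    proof (rule AE_I2)
      fix y
      show "norm (indicator core y * liouville_integrand v \<iota> \<psi> e t (flow_ext (t, y))) \<le> max 0 C"
      proof (cases "y \<in> core")
        case True
        then have "y \<in> A" using core_subset by blast
        with True C[OF \<open>t \<in> {a..b}\<close> True] \<open>t \<in> {a..b}\<close> show ?thesis by simp
      qed simp
    qed
    show "(\<lambda>y. indicator core y * liouville_integrand v \<iota> \<psi> e t (flow_ext (t, y))) \<in> borel_measurable \<nu>"
      using core_borel sets_\<nu> LI_flow_borel by (intro borel_measurable_times borel_measurable_indicator) auto
  qed
  then have "integrable \<nu> (\<lambda>y. liouville_integrand v \<iota> \<psi> e t (flow_ext (t, y)))"
    using integrable_cong_AE[OF LI_flow_borel _ AE_eq] by blast
  then show "integrable (distr (restrict_space \<nu> A) borel (\<phi> t)) (liouville_integrand v \<iota> \<psi> e t)"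
    unfolding pushforward_eq_distr[OF \<open>t \<in> {a..b}\<close>]
    by (simp add: integrable_distr_eq[OF flow_ext_section_measurable LI_borel])
  show "(LINT x|distr (restrict_space \<nu> A) borel (\<phi> t). liouville_integrand v \<iota> \<psi> e t x)
      = (\<integral>y. indicator core y * liouville_integrand v \<iota> \<psi> e t (flow_ext (t, y)) \<partial>\<nu>)"
    unfolding pushforward_eq_distr[OF \<open>t \<in> {a..b}\<close>] integral_distr[OF flow_ext_section_measurable LI_borel]
    by (rule integral_cong_AE[OF LI_flow_borel _ AE_eq])
      (use core_borel sets_\<nu> LI_flow_borel in \<open>auto intro!: borel_measurable_times borel_measurable_indicator\<close>)
qed

lemma liouville_time_integral_zero:
  fixes \<psi> :: "real \<times> (real^'n) \<Rightarrow> real" and e :: "'n::finite \<Rightarrow> 'b"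
  assumes grad: "\<And>p. GDERIV \<psi> p :> D\<psi> p" and cont: "continuous_on UNIV D\<psi>"
    and vanish: "\<And>z. \<psi> (a, z) = 0" "\<And>z. \<psi> (b, z) = 0"
  defines "H \<equiv> \<lambda>p. indicator ({a<..<b} \<times> core) p * liouville_integrand v \<iota> \<psi> e (fst p) (flow_ext p)"
  shows "integrable lborel (\<lambda>t. \<integral>y. H (t, y) \<partial>\<nu>)" and "(\<integral>t. (\<integral>y. H (t, y) \<partial>\<nu>) \<partial>lborel) = 0"
proof -
  obtain C where C: "\<And>r y. r \<in> {a..b} \<Longrightarrow> y \<in> core \<Longrightarrow> \<bar>liouville_integrand v \<iota> \<psi> e r (\<phi> r y)\<bar> \<le> C"
    using liouville_integrand_flow_bounded[OF grad cont core_subset bounded_core] by blast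
  have "{a<..<b} \<times> core \<in> sets (borel :: (real \<times> 'a) measure)"
    using core_borel by (intro borel_Times) auto
  then have H_borel: "H \<in> borel_measurable borel"
    unfolding H_def using liouville_integrand_flow_borel[OF grad cont]
    by (intro borel_measurable_times borel_measurable_indicator) auto
  have H_meas: "H \<in> borel_measurable (lborel \<Otimes>\<^sub>M \<nu>)"
    unfolding measurable_cong_sets[OF sets_lborel_pair_\<nu> refl] by (rule H_borel)
  have H_bound: "\<bar>H (t, y)\<bar> \<le> max 0 C * indicator {a..b} t" for t y
  proof (cases "t \<in> {a<..<b} \<and> y \<in> core")
    case True
    then have "y \<in> A" "t \<in> {a..b}" using core_subset by auto
    with True have "\<bar>H (t, y)\<bar> = \<bar>liouville_integrand v \<iota> \<psi> e t (\<phi> t y)\<bar>"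
      by (simp add: H_def)
    also have "\<dots> \<le> C" using C True \<open>t \<in> {a..b}\<close> by blast
    finally show ?thesis using \<open>t \<in> {a..b}\<close> by simp
  next
    case False
    then have "H (t, y) = 0" by (simp add: H_def)
    then show ?thesis by simp
  qed
  have H_section: "(\<integral>t. H (t, y) \<partial>lborel) = 0" for y
  proof (cases "y \<in> core")
    case True
    then have "(\<integral>t. H (t, y) \<partial>lborel)
        = (LINT r:{a<..<b}|lborel. liouville_integrand v \<iota> \<psi> e r (flow_ext (r, y)))"
      by (simp add: H_def set_lebesgue_integral_def indicator_times)
    also have "\<dots> = 0"
      using True core_subset by (intro liouville_integrand_flow_set_integral_zero[OF grad cont vanish]) blast
    finally show ?thesis .
  next
    case False
    then have "H (t, y) = 0" for t by (simp add: H_def)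
    then show ?thesis by simp
  qed
  show "integrable lborel (\<lambda>t. \<integral>y. H (t, y) \<partial>\<nu>)" and "(\<integral>t. (\<integral>y. H (t, y) \<partial>\<nu>) \<partial>lborel) = 0"
    using integral_lborel_eq_zero_if_sections_zero[OF _ H_meas H_bound H_section]
      prob_space.finite_measure[OF prob_space_\<nu>] by blast+
qed

lemma liouville_eq_pushforward:
  fixes e :: "'n::finite \<Rightarrow> 'b"
  shows "liouville_eq {a<..<b} v \<iota> (\<lambda>t. distr (restrict_space \<nu> A) borel (\<phi> t)) e"
  unfolding liouville_eq_def
proof (intro impI allI)
  fix \<psi> :: "real \<times> (real^'n) \<Rightarrow> real"
  assume "test_fun {a<..<b} \<psi>"
  then obtain D\<psi> where grad: "\<And>p. GDERIV \<psi> p :> D\<psi> p" and cont: "continuous_on UNIV D\<psi>"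
    using Ck1_continuous_gradient unfolding test_fun_def smooth_fun_def by blast
  have vanish: "\<psi> (a, z) = 0" "\<psi> (b, z) = 0" for z
    using test_fun_vanishes[OF \<open>test_fun {a<..<b} \<psi>\<close>] by auto
  let ?\<mu> = "\<lambda>t. distr (restrict_space \<nu> A) borel (\<phi> t)"
  define G where "G t = (\<integral>y. indicator ({a<..<b} \<times> core) (t, y)
      * liouville_integrand v \<iota> \<psi> e t (flow_ext (t, y)) \<partial>\<nu>)" for t
  have G_eq: "indicator {a<..<b} t *\<^sub>R (LINT x|?\<mu> t. liouville_integrand v \<iota> \<psi> e t x) = G t" for t
  proof (cases "t \<in> {a<..<b}")
    case True
    then show ?thesis
      using liouville_integrand_pushforward(2)[OF grad cont, of t] by (simp add: G_def indicator_times)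
  qed (simp add: G_def indicator_times)
  have G: "integrable lborel G" "integral\<^sup>L lborel G = 0"
    using liouville_time_integral_zero[OF grad cont vanish] unfolding G_def by simp_all
  have G_borel: "G \<in> borel_measurable lborel"
    using G(1) by (rule borel_measurable_integrable)
  show "(AE t in lebesgue. t \<in> {a<..<b} \<longrightarrow> integrable (?\<mu> t) (liouville_integrand v \<iota> \<psi> e t)) \<and>
      set_integrable lebesgue {a<..<b} (\<lambda>t. LINT x|?\<mu> t. liouville_integrand v \<iota> \<psi> e t x) \<and>
      (LINT t:{a<..<b}|lebesgue. (LINT x|?\<mu> t. liouville_integrand v \<iota> \<psi> e t x)) = 0"
    unfolding set_integrable_def set_lebesgue_integral_def G_eq
    using liouville_integrand_pushforward(1)[OF grad cont] G
    by (auto simp: integrable_completion[OF G_borel] integral_completion[OF G_borel])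
qed

end

theorem mainTheorem5:
  fixes \<iota> :: "'a::{real_inner, polish_space} \<Rightarrow> 'b::{real_inner, polish_space}"
    and v :: "real \<Rightarrow> 'a \<Rightarrow> 'b"
    and a b t\<^sub>0 :: real
    and \<A> :: "'a set"
    and \<phi> :: "real \<Rightarrow> 'a \<Rightarrow> 'a"
    and \<nu> :: "'a measure"
    and e :: "'n::finite \<Rightarrow> 'b"
  assumes emb: "bounded_linear \<iota>" "inj \<iota>" "closure (range \<iota>) = UNIV"
    and v_borel: "(\<lambda>p. v (fst p) (snd p)) \<in> borel_measurable (borel :: (real \<times> 'a) measure)"
    and v_bdd: "\<forall>B :: (real \<times> 'a) set. bounded B \<longrightarrow> bounded ((\<lambda>p. v (fst p) (snd p)) ` B)"
    and I: "a < b" "t\<^sub>0 \<in> {a<..<b}"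
    and A_borel: "\<A> \<in> sets borel"
    and phi_borel: "(\<lambda>p. \<phi> (fst p) (snd p)) \<in> borel_measurable (restrict_space borel ({a..b} \<times> \<A>))"
    and phi_bdd: "\<forall>B. B \<subseteq> {a..b} \<times> \<A> \<longrightarrow> bounded B \<longrightarrow> bounded ((\<lambda>p. \<phi> (fst p) (snd p)) ` B)"
    and phi_sol: "\<forall>x\<in>\<A>. weak_solution \<iota> v {a..b} (\<lambda>t. \<phi> t x) \<and> \<phi> t\<^sub>0 x = x"
    and nu: "prob_space \<nu>" "sets \<nu> = sets borel"
    and nu_A: "AE x in \<nu>. x \<in> \<A>"
    and nu_bdd: "\<exists>R. AE x in \<nu>. norm x \<le> R"
  shows "liouville_eq {a<..<b} v \<iota> (\<lambda>t. distr (restrict_space \<nu> \<A>) borel (\<phi> t)) e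
       \<and> distr (restrict_space \<nu> \<A>) borel (\<phi> t\<^sub>0) = \<nu>
       \<and> (\<forall>t\<in>{a<..<b}. prob_space (distr (distr (restrict_space \<nu> \<A>) borel (\<phi> t)) borel \<iota>))
       \<and> strongly_narrowly_continuous {a<..<b} \<iota> (\<lambda>t. distr (restrict_space \<nu> \<A>) borel (\<phi> t))"
proof -
  obtain R where R: "AE x in \<nu>. norm x \<le> R" using nu_bdd by blast
  interpret weak_solution_flow_pushforward \<iota> v a b \<A> \<phi> \<nu> R
  proof (intro weak_solution_flow_pushforward.intro weak_solution_flow.intro
      weak_solution_flow_pushforward_axioms.intro)
    show "\<And>B. bounded B \<Longrightarrow> bounded ((\<lambda>p. v (fst p) (snd p)) ` B)" using v_bdd by blast
    show "a \<le> b" using I by simp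
    show "\<And>B. B \<subseteq> {a..b} \<times> \<A> \<Longrightarrow> bounded B \<Longrightarrow> bounded ((\<lambda>p. \<phi> (fst p) (snd p)) ` B)"
      using phi_bdd by blast
    show "\<And>x. x \<in> \<A> \<Longrightarrow> weak_solution \<iota> v {a..b} (\<lambda>t. \<phi> t x)" using phi_sol by blast
  qed (fact emb(1) v_borel A_borel phi_borel nu nu_A R)+
  show ?thesis
  proof (intro conjI ballI)
    show "distr (restrict_space \<nu> \<A>) borel (\<phi> t\<^sub>0) = \<nu>"
      using phi_sol by (intro pushforward_initial) blast
    show "prob_space (distr (distr (restrict_space \<nu> \<A>) borel (\<phi> t)) borel \<iota>)"
      if "t \<in> {a<..<b}" for t
      using that by (intro prob_space_pushforward) auto
  qed (fact liouville_eq_pushforward strongly_narrowly_continuous_pushforward)+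
qed

end
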